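(* Let $K\geq 4$ and let $H$ be a signed bipartite graph. If a signed bipartite graph $G$ whose $+$ class has size $m$ and $-$ class has size $n$ has at least $K\cdot z(m, n,H)$ edges, then $G$ contains at least $\left(\frac{K}{2}\right)^{\mathrm{e}(H)} \cdot z(m,n,H)$ signed copies of $H$.
   Context: A signed bipartite graph is a bipartite graph with a proper vertex 2-colouring by $+$ and $-$. A signed copy of $H$ in $G$ is a copy of $H$ in $G$ with $+$ vertices mapped into the $+$ class and $-$ vertices into the $-$ class. $z(m,n,H)$ is the maximum number of edges in a signed bipartite graph with $+$ class of size $m$ and $-$ class of size $n$ containing no signed copy of $H$. *)

theory Defs
  imports Complex_Main
begin

text \<open>A signed bipartite graph is given by its + class P, its - class Q and its
  edge set F, a subset of P \<times> Q (edges always join the + class to the - class).\<close>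

definition signed_bigraph :: "'a set \<Rightarrow> 'b set \<Rightarrow> ('a \<times> 'b) set \<Rightarrow> bool" where
  "signed_bigraph P Q F \<longleftrightarrow> finite P \<and> finite Q \<and> F \<subseteq> P \<times> Q"

definition signed_embedding ::
  "'a set \<Rightarrow> 'b set \<Rightarrow> ('a \<times> 'b) set \<Rightarrow> 'c set \<Rightarrow> 'd set \<Rightarrow> ('c \<times> 'd) set
   \<Rightarrow> ('a \<Rightarrow> 'c) \<Rightarrow> ('b \<Rightarrow> 'd) \<Rightarrow> bool" where
  "signed_embedding P Q F A B E f g \<longleftrightarrow>
     inj_on f P \<and> inj_on g Q \<and> f ` P \<subseteq> A \<and> g ` Q \<subseteq> B \<and>
     (\<forall>(p, q) \<in> F. (f p, g q) \<in> E)"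

definition signed_copies ::
  "'a set \<Rightarrow> 'b set \<Rightarrow> ('a \<times> 'b) set \<Rightarrow> 'c set \<Rightarrow> 'd set \<Rightarrow> ('c \<times> 'd) set
   \<Rightarrow> ('c set \<times> 'd set \<times> ('c \<times> 'd) set) set" where
  "signed_copies P Q F A B E =
     {(f ` P, g ` Q, (\<lambda>(p, q). (f p, g q)) ` F) | f g. signed_embedding P Q F A B E f g}"

definition contains_signed_copy ::
  "'a set \<Rightarrow> 'b set \<Rightarrow> ('a \<times> 'b) set \<Rightarrow> 'c set \<Rightarrow> 'd set \<Rightarrow> ('c \<times> 'd) set \<Rightarrow> bool" where
  "contains_signed_copy P Q F A B E \<longleftrightarrow> (\<exists>f g. signed_embedding P Q F A B E f g)"

text \<open>z(m,n,H): maximum number of edges of a signed bipartite graph with + class of size m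
  and - class of size n (w.l.o.g. the vertex sets {..<m} and {..<n}) with no signed copy
  of H.  (Sup of an empty set of naturals is 0; this only happens when H is edgeless.)\<close>

definition zarank :: "nat \<Rightarrow> nat \<Rightarrow> 'a set \<Rightarrow> 'b set \<Rightarrow> ('a \<times> 'b) set \<Rightarrow> nat" where
  "zarank m n P Q F = Sup {card E | E. E \<subseteq> {..<m} \<times> {..<n} \<and>
                               \<not> contains_signed_copy P Q F {..<m} {..<n} E}"

end

theory Submission
  imports Defs
begin

text \<open>Write z = z(m,n,H), e = e(H) and M = e(G) \<ge> K z.  Every subgraph S of G contains at
  least |S| - z signed copies of H, since deleting one edge from each of them leaves an H-free
  graph.  Averaging over all subgraphs with s = 2z edges, each copy lies in
  C(M - e, s - e) of them, so #copies \<cdot> C(M - e, s - e) \<ge> C(M, s) \<cdot> z; and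
  C(M - e, s - e) / C(M, s) \<le> (s / M)^e gives #copies \<ge> z (M / 2z)^e \<ge> (K/2)^e z.\<close>

lemma power_mult_binomial_mono:
  assumes "e \<le> s" "s \<le> M"
  shows "real M ^ e * real (s choose e) \<le> real s ^ e * real (M choose e)"
proof -
  have "real M ^ e * real (s choose e) = (\<Prod>i = 0..<e. real M * (real (s - i) / real (e - i)))"
    using assms
    by (simp only: binomial_altdef_of_nat prod.distrib prod_constant card_atLeastLessThan diff_zero)
  also have "\<dots> \<le> (\<Prod>i = 0..<e. real s * (real (M - i) / real (e - i)))"
  proof (rule prod_mono)
    fix i assume "i \<in> {0..<e}"
    have "real i * real s \<le> real i * real M"
      using assms by (simp add: mult_left_mono)
    moreover have "i \<le> s" "i \<le> M"
      using \<open>i \<in> {0..<e}\<close> assms by auto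
    ultimately have "real M * real (s - i) \<le> real s * real (M - i)"
      by (simp add: of_nat_diff algebra_simps)
    then show "0 \<le> real M * (real (s - i) / real (e - i)) \<and>
        real M * (real (s - i) / real (e - i)) \<le> real s * (real (M - i) / real (e - i))"
      by (simp add: divide_right_mono)
  qed
  also have "\<dots> = real s ^ e * real (M choose e)"
    using assms
    by (simp only: binomial_altdef_of_nat prod.distrib prod_constant card_atLeastLessThan diff_zero)
  finally show ?thesis .
qed

lemma binomial_superset_ratio_le:
  assumes "e \<le> s" "s \<le> M"
  shows "real M ^ e * real ((M - e) choose (s - e)) \<le> real (M choose s) * real s ^ e"
proof -
  have "real (M choose e) * (real M ^ e * real ((M - e) choose (s - e)))
      = real (M choose s) * (real M ^ e * real (s choose e))"
    using choose_mult[OF assms] by (metis (mono_tags) of_nat_mult mult.left_commute)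
  also have "\<dots> \<le> real (M choose s) * (real s ^ e * real (M choose e))"
    using power_mult_binomial_mono[OF assms] by (rule mult_left_mono) simp
  finally show ?thesis
    using assms by (simp add: algebra_simps)
qed

lemma card_supersets_of_card:
  assumes "finite E" "T \<subseteq> E" "card T \<le> s"
  shows "card {S. S \<subseteq> E \<and> card S = s \<and> T \<subseteq> S} = (card E - card T) choose (s - card T)"
proof -
  have "finite T"
    using assms finite_subset by blast
  have "bij_betw (\<lambda>U. U \<union> T) {U. U \<subseteq> E - T \<and> card U = s - card T}
          {S. S \<subseteq> E \<and> card S = s \<and> T \<subseteq> S}" (is "bij_betw _ ?Us ?Ss")
  proof (rule bij_betw_byWitness[where f' = "\<lambda>S. S - T"])
    show "(\<lambda>U. U \<union> T) ` ?Us \<subseteq> ?Ss"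
    proof clarify
      fix U assume "U \<subseteq> E - T" "card U = s - card T"
      moreover have "finite U"
        using \<open>U \<subseteq> E - T\<close> assms(1) finite_subset by blast
      moreover have "U \<inter> T = {}"
        using \<open>U \<subseteq> E - T\<close> by blast
      ultimately show "U \<union> T \<subseteq> E \<and> card (U \<union> T) = s \<and> T \<subseteq> U \<union> T"
        using assms \<open>finite T\<close> by (auto simp: card_Un_disjoint)
    qed
  qed (use assms \<open>finite T\<close> in \<open>auto simp: card_Diff_subset\<close>)
  then have "card {S. S \<subseteq> E \<and> card S = s \<and> T \<subseteq> S} = card (E - T) choose (s - card T)"
    using assms by (simp add: bij_betw_same_card[symmetric] n_subsets)
  then show ?thesis
    using assms \<open>finite T\<close> by (simp add: card_Diff_subset)
qed

lemma sum_card_contained_in_subsets: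
  assumes "finite E" "finite C"
    and X: "\<And>c. c \<in> C \<Longrightarrow> X c \<subseteq> E \<and> card (X c) = e" and "e \<le> s"
  shows "(\<Sum>S \<in> {S. S \<subseteq> E \<and> card S = s}. card {c \<in> C. X c \<subseteq> S})
           = card C * ((card E - e) choose (s - e))"
proof -
  let ?Ss = "{S. S \<subseteq> E \<and> card S = s}"
  have "finite ?Ss"
    using \<open>finite E\<close> by simp
  have "(\<Sum>S \<in> ?Ss. card {c \<in> C. X c \<subseteq> S})
      = (\<Sum>S \<in> ?Ss. \<Sum>c \<in> C. of_bool (X c \<subseteq> S))"
    using \<open>finite C\<close> by (simp add: sum.inter_filter[symmetric] Int_def)
  also have "\<dots> = (\<Sum>c \<in> C. \<Sum>S \<in> ?Ss. of_bool (X c \<subseteq> S))"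
    by (rule sum.swap)
  also have "\<dots> = (\<Sum>c \<in> C. card {S. S \<subseteq> E \<and> card S = s \<and> X c \<subseteq> S})"
    using \<open>finite ?Ss\<close> by (simp add: sum.inter_filter[symmetric] Int_def conj_assoc)
  also have "\<dots> = (\<Sum>c \<in> C. (card E - e) choose (s - e))"
    using X \<open>e \<le> s\<close> by (simp add: card_supersets_of_card[OF \<open>finite E\<close>])
  finally show ?thesis
    by simp
qed

lemma choose_mult_diff_le:
  assumes "finite E" "finite C"
    and X: "\<And>c. c \<in> C \<Longrightarrow> X c \<subseteq> E \<and> card (X c) = e"
    and many_inside: "\<And>S. S \<subseteq> E \<Longrightarrow> card S \<le> z + card {c \<in> C. X c \<subseteq> S}"
    and "e \<le> s"
  shows "(card E choose s) * (s - z) \<le> card C * ((card E - e) choose (s - e))"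
proof -
  let ?Ss = "{S. S \<subseteq> E \<and> card S = s}"
  have "(card E choose s) * s \<le> (\<Sum>S \<in> ?Ss. z + card {c \<in> C. X c \<subseteq> S})"
    using sum_mono[of ?Ss card, OF many_inside] \<open>finite E\<close> by (simp add: n_subsets)
  also have "\<dots> = (card E choose s) * z + card C * ((card E - e) choose (s - e))"
    using sum_card_contained_in_subsets[OF assms(1,2) X \<open>e \<le> s\<close>] \<open>finite E\<close>
    by (simp add: sum.distrib n_subsets)
  finally show ?thesis
    by (simp add: diff_mult_distrib2)
qed

lemma supersaturation_by_averaging:
  fixes X :: "'c \<Rightarrow> 'e set"
  assumes "finite E" "finite C"
    and X: "\<And>c. c \<in> C \<Longrightarrow> X c \<subseteq> E \<and> card (X c) = e"
    and many_inside: "\<And>S. S \<subseteq> E \<Longrightarrow> card S \<le> z + card {c \<in> C. X c \<subseteq> S}"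
    and "2 * z \<le> card E"
  shows "real z * real (card E) ^ e \<le> real (card C) * real (2 * z) ^ e"
proof (cases "z = 0")
  case False
  define s M where "s = 2 * z" and "M = card E"
  have "s \<le> M"
    using \<open>2 * z \<le> card E\<close> unfolding s_def M_def .
  have "e \<le> s"
  proof -
    obtain S0 where "S0 \<subseteq> E" "card S0 = s"
      using obtain_subset_with_card_n \<open>s \<le> M\<close> unfolding M_def by metis
    then have "card {c \<in> C. X c \<subseteq> S0} \<noteq> 0"
      using many_inside[of S0] False unfolding s_def by linarith
    then obtain c where "c \<in> C" "X c \<subseteq> S0"
      by (metis (no_types, lifting) Collect_empty_eq card.empty)
    then have "card (X c) \<le> card S0"
      using \<open>S0 \<subseteq> E\<close> \<open>finite E\<close> by (meson card_mono finite_subset)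
    then show ?thesis
      using X[OF \<open>c \<in> C\<close>] \<open>card S0 = s\<close> by simp
  qed
  have "(M choose s) * z \<le> card C * ((M - e) choose (s - e))"
    using choose_mult_diff_le[OF assms(1-4) \<open>e \<le> s\<close>] unfolding s_def M_def by simp
  then have avg: "real (M choose s) * real z \<le> real (card C) * real ((M - e) choose (s - e))"
    by (metis of_nat_le_iff of_nat_mult)
  have "real z * (real M ^ e * real ((M - e) choose (s - e)))
      \<le> real z * (real (M choose s) * real s ^ e)"
    using binomial_superset_ratio_le[OF \<open>e \<le> s\<close> \<open>s \<le> M\<close>] by (simp add: mult_left_mono)
  also have "\<dots> = real (M choose s) * real z * real s ^ e"
    by simp
  also have "\<dots> \<le> real (card C) * real ((M - e) choose (s - e)) * real s ^ e"
    using avg by (simp add: mult_right_mono)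
  finally have "real z * real M ^ e * real ((M - e) choose (s - e))
      \<le> real (card C) * real s ^ e * real ((M - e) choose (s - e))"
    by (simp add: algebra_simps)
  moreover have "(M - e) choose (s - e) > 0"
    using \<open>e \<le> s\<close> \<open>s \<le> M\<close> by simp
  ultimately show ?thesis
    unfolding s_def M_def by (simp add: mult_le_cancel_right_pos)
qed simp

lemma signed_embedding_comp:
  assumes "signed_embedding P Q F A B E f g" "signed_embedding A B E A' B' E' f' g'"
  shows "signed_embedding P Q F A' B' E' (f' \<circ> f) (g' \<circ> g)"
  unfolding signed_embedding_def
proof (intro conjI)
  have f: "inj_on f P" "f ` P \<subseteq> A" "\<forall>(p, q) \<in> F. (f p, g q) \<in> E"
    and g: "inj_on g Q" "g ` Q \<subseteq> B"
    and f': "inj_on f' A" "f' ` A \<subseteq> A'" "\<forall>(a, b) \<in> E. (f' a, g' b) \<in> E'"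
    and g': "inj_on g' B" "g' ` B \<subseteq> B'"
    using assms unfolding signed_embedding_def by auto
  show "inj_on (f' \<circ> f) P"
    using f(1) inj_on_subset[OF f'(1) f(2)] by (rule comp_inj_on)
  show "inj_on (g' \<circ> g) Q"
    using g(1) inj_on_subset[OF g'(1) g(2)] by (rule comp_inj_on)
  show "(f' \<circ> f) ` P \<subseteq> A'"
    using f(2) f'(2) by (auto simp: image_subset_iff)
  show "(g' \<circ> g) ` Q \<subseteq> B'"
    using g(2) g'(2) by (auto simp: image_subset_iff)
  show "\<forall>(p, q) \<in> F. ((f' \<circ> f) p, (g' \<circ> g) q) \<in> E'"
    using f(3) f'(3) by auto
qed

lemma signed_embedding_mono:
  "signed_embedding P Q F A B S f g \<Longrightarrow> S \<subseteq> E \<Longrightarrow> signed_embedding P Q F A B E f g"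
  unfolding signed_embedding_def by (auto simp: subset_iff)

lemma signed_embedding_edgeless_iff:
  "signed_embedding P Q {} A B E f g \<longleftrightarrow> signed_embedding P Q {} A B E' f g"
  unfolding signed_embedding_def by simp

lemma signed_embedding_the_inv_into:
  assumes "bij_betw \<alpha> A A'" "bij_betw \<beta> B B'" "S \<subseteq> A \<times> B"
  shows "signed_embedding A' B' (map_prod \<alpha> \<beta> ` S) A B S (the_inv_into A \<alpha>) (the_inv_into B \<beta>)"
  unfolding signed_embedding_def
proof (intro conjI)
  have "bij_betw (the_inv_into A \<alpha>) A' A" "bij_betw (the_inv_into B \<beta>) B' B"
    using assms(1,2) by (auto intro: bij_betw_the_inv_into)
  then show "inj_on (the_inv_into A \<alpha>) A'" "inj_on (the_inv_into B \<beta>) B'"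
    "the_inv_into A \<alpha> ` A' \<subseteq> A" "the_inv_into B \<beta> ` B' \<subseteq> B"
    unfolding bij_betw_def by auto
  show "\<forall>(a', b') \<in> map_prod \<alpha> \<beta> ` S. (the_inv_into A \<alpha> a', the_inv_into B \<beta> b') \<in> S"
  proof clarsimp
    fix a b assume "(a, b) \<in> S"
    then have "a \<in> A" "b \<in> B"
      using assms(3) by auto
    then show "(the_inv_into A \<alpha> (\<alpha> a), the_inv_into B \<beta> (\<beta> b)) \<in> S"
      using \<open>(a, b) \<in> S\<close> assms(1,2) by (simp add: bij_betw_def the_inv_into_f_f)
  qed
qed

lemma obtain_bij_betw_lessThan_card:
  assumes "finite A"
  obtains \<alpha> where "bij_betw \<alpha> A {..<card A}"
  using ex_bij_betw_finite_nat[OF assms] by (auto simp: atLeast0LessThan)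

lemma card_le_zarank:
  assumes "signed_bigraph A B S" "card A = m" "card B = n"
    and "\<not> contains_signed_copy P Q F A B S"
  shows "card S \<le> zarank m n P Q F"
proof -
  have "finite A" "finite B" "S \<subseteq> A \<times> B"
    using assms(1) unfolding signed_bigraph_def by auto
  obtain \<alpha> \<beta> where \<alpha>: "bij_betw \<alpha> A {..<m}" and \<beta>: "bij_betw \<beta> B {..<n}"
    using obtain_bij_betw_lessThan_card[OF \<open>finite A\<close>] obtain_bij_betw_lessThan_card[OF \<open>finite B\<close>]
      assms(2,3) by metis
  let ?S' = "map_prod \<alpha> \<beta> ` S"
  have "?S' \<subseteq> {..<m} \<times> {..<n}"
    using \<open>S \<subseteq> A \<times> B\<close> \<alpha> \<beta> unfolding bij_betw_def by auto
  have "inj_on (map_prod \<alpha> \<beta>) (A \<times> B)"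
    using \<alpha> \<beta> unfolding bij_betw_def by (simp add: map_prod_inj_on)
  then have "card ?S' = card S"
    using \<open>S \<subseteq> A \<times> B\<close> by (meson card_image inj_on_subset)
  have S'_free: "\<not> contains_signed_copy P Q F {..<m} {..<n} ?S'"
    using assms(4)
      signed_embedding_comp[OF _ signed_embedding_the_inv_into[OF \<alpha> \<beta> \<open>S \<subseteq> A \<times> B\<close>]]
    unfolding contains_signed_copy_def by blast
  have "bdd_above {card E | E. E \<subseteq> {..<m} \<times> {..<n} \<and> \<not> contains_signed_copy P Q F {..<m} {..<n} E}"
    by (rule bdd_aboveI[where M = "card ({..<m} \<times> {..<n})"])
      (use card_mono[of "{..<m} \<times> {..<n}"] in auto)
  then show ?thesis
    unfolding zarank_def
    using \<open>?S' \<subseteq> _\<close> S'_free \<open>card ?S' = card S\<close>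
    by (metis (mono_tags, lifting) cSup_upper mem_Collect_eq)
qed

lemma zarank_edgeless_eq_0:
  assumes "signed_bigraph A B E" "card A = m" "card B = n"
    and "contains_signed_copy P Q {} A B E"
  shows "zarank m n P Q {} = 0"
proof -
  have "finite A" "finite B"
    using assms(1) unfolding signed_bigraph_def by auto
  obtain \<alpha> \<beta> where \<alpha>: "bij_betw \<alpha> A {..<m}" and \<beta>: "bij_betw \<beta> B {..<n}"
    using obtain_bij_betw_lessThan_card[OF \<open>finite A\<close>] obtain_bij_betw_lessThan_card[OF \<open>finite B\<close>]
      assms(2,3) by metis
  obtain f g where "signed_embedding P Q {} A B {} f g"
    using assms(4) signed_embedding_edgeless_iff unfolding contains_signed_copy_def by blast
  moreover have "signed_embedding A B {} {..<m} {..<n} S \<alpha> \<beta>" for S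
    using \<alpha> \<beta> unfolding signed_embedding_def bij_betw_def by simp
  ultimately have "contains_signed_copy P Q {} {..<m} {..<n} S" for S
    using signed_embedding_comp unfolding contains_signed_copy_def by blast
  then show ?thesis
    unfolding zarank_def by (simp add: Sup_nat_def)
qed

lemma finite_signed_copies:
  assumes "signed_bigraph A B E"
  shows "finite (signed_copies P Q F A B E)"
proof (rule finite_subset)
  show "signed_copies P Q F A B E \<subseteq> Pow A \<times> Pow B \<times> Pow E"
    unfolding signed_copies_def signed_embedding_def by auto
  have "finite A" "finite B" "E \<subseteq> A \<times> B"
    using assms unfolding signed_bigraph_def by auto
  then show "finite (Pow A \<times> Pow B \<times> Pow E)"
    by (simp add: finite_subset)
qed

lemma signed_copy_edges:
  assumes "c \<in> signed_copies P Q F A B E" "F \<subseteq> P \<times> Q"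
  shows "snd (snd c) \<subseteq> E \<and> card (snd (snd c)) = card F"
proof -
  obtain f g where fg: "signed_embedding P Q F A B E f g"
    and c: "snd (snd c) = (\<lambda>(p, q). (f p, g q)) ` F"
    using assms(1) unfolding signed_copies_def by auto
  have "inj_on (map_prod f g) (P \<times> Q)"
    using fg unfolding signed_embedding_def by (simp add: map_prod_inj_on)
  then have "card (map_prod f g ` F) = card F"
    using assms(2) by (meson card_image inj_on_subset)
  then show ?thesis
    using fg c unfolding signed_embedding_def map_prod_def by auto
qed

lemma card_le_zarank_plus_copies:
  assumes "F \<noteq> {}" "signed_bigraph A B E" "card A = m" "card B = n" "S \<subseteq> E"
  shows "card S \<le> zarank m n P Q F + card {c \<in> signed_copies P Q F A B E. snd (snd c) \<subseteq> S}"
proof -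
  let ?C = "{c \<in> signed_copies P Q F A B E. snd (snd c) \<subseteq> S}"
  define R where "R = (\<lambda>c. SOME x. x \<in> snd (snd c)) ` ?C"
  have "finite ?C"
    using finite_signed_copies[OF assms(2), of P Q F] by simp
  have "\<not> contains_signed_copy P Q F A B (S - R)"
  proof
    assume "contains_signed_copy P Q F A B (S - R)"
    then obtain f g where fg: "signed_embedding P Q F A B (S - R) f g"
      unfolding contains_signed_copy_def by blast
    define c where "c = (f ` P, g ` Q, (\<lambda>(p, q). (f p, g q)) ` F)"
    have "c \<in> signed_copies P Q F A B E"
      using signed_embedding_mono[OF fg] assms(5) unfolding signed_copies_def c_def by blast
    moreover have "snd (snd c) \<subseteq> S - R"
      using fg unfolding c_def signed_embedding_def by auto
    ultimately have "(SOME x. x \<in> snd (snd c)) \<in> R"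
      unfolding R_def by blast
    moreover have "(SOME x. x \<in> snd (snd c)) \<in> snd (snd c)"
      using assms(1) unfolding c_def by (simp add: some_in_eq)
    ultimately show False
      using \<open>snd (snd c) \<subseteq> S - R\<close> by blast
  qed
  then have "card (S - R) \<le> zarank m n P Q F"
    using assms(2-5) by (intro card_le_zarank) (auto simp: signed_bigraph_def)
  moreover have "card S - card R \<le> card (S - R)"
    using \<open>finite ?C\<close> unfolding R_def by (intro diff_card_le_card_Diff finite_imageI)
  moreover have "card R \<le> card ?C"
    unfolding R_def using \<open>finite ?C\<close> by (rule card_image_le)
  ultimately show ?thesis
    by linarith
qed

lemma edges_nonempty_if_zarank_pos:
  assumes "signed_bigraph A B E" "card A = m" "card B = n"
    and "0 < zarank m n P Q F" "zarank m n P Q F < card E"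
  shows "F \<noteq> {}"
proof
  assume "F = {}"
  show False
  proof (cases "contains_signed_copy P Q F A B E")
    case True
    then show False
      using zarank_edgeless_eq_0[OF assms(1-3) True[unfolded \<open>F = {}\<close>]] \<open>F = {}\<close> assms(4)
      by simp
  next
    case False
    then show False
      using card_le_zarank[OF assms(1-3)] assms(5) by fastforce
  qed
qed

lemma card_signed_copies_lower_bound:
  assumes "signed_bigraph P Q F" "signed_bigraph A B E" "card A = m" "card B = n"
    and "0 < zarank m n P Q F" "2 * zarank m n P Q F \<le> card E"
  shows "real (zarank m n P Q F) * real (card E) ^ card F
           \<le> real (card (signed_copies P Q F A B E)) * real (2 * zarank m n P Q F) ^ card F"
proof (rule supersaturation_by_averaging)
  have "F \<noteq> {}"
    using edges_nonempty_if_zarank_pos[OF assms(2-5)] assms(5,6) by linarith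
  show "card S \<le> zarank m n P Q F + card {c \<in> signed_copies P Q F A B E. snd (snd c) \<subseteq> S}"
    if "S \<subseteq> E" for S
    using card_le_zarank_plus_copies[OF \<open>F \<noteq> {}\<close> assms(2-4) that] .
  show "finite E"
    using assms(2) unfolding signed_bigraph_def by (meson finite_SigmaI finite_subset)
  show "finite (signed_copies P Q F A B E)"
    using assms(2) by (rule finite_signed_copies)
  show "snd (snd c) \<subseteq> E \<and> card (snd (snd c)) = card F" if "c \<in> signed_copies P Q F A B E" for c
    using signed_copy_edges[OF that] assms(1) unfolding signed_bigraph_def by blast
qed (use assms(6) in simp)

theorem lemma4p1:
  fixes K :: real
    and P :: "'a set" and Q :: "'b set" and F :: "('a \<times> 'b) set"
    and A :: "'c set" and B :: "'d set" and E :: "('c \<times> 'd) set"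
    and m n :: nat
  assumes "K \<ge> 4"
    and "signed_bigraph P Q F"
    and "signed_bigraph A B E"
    and "card A = m" and "card B = n"
    and "real (card E) \<ge> K * real (zarank m n P Q F)"
  shows "real (card (signed_copies P Q F A B E))
           \<ge> (K / 2) ^ card F * real (zarank m n P Q F)"
proof (cases "zarank m n P Q F = 0")
  case False
  define z where "z = zarank m n P Q F"
  have "z > 0"
    using False unfolding z_def by simp
  have "4 * real z \<le> K * real z"
    using assms(1) by (simp add: mult_right_mono)
  then have "2 * z \<le> card E"
    using assms(6) unfolding z_def by linarith
  have "K / 2 \<le> real (card E) / real (2 * z)"
    using assms(6) \<open>z > 0\<close> unfolding z_def by (simp add: field_simps)
  then have "(K / 2) ^ card F * real z \<le> (real (card E) / real (2 * z)) ^ card F * real z"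
    using assms(1) by (intro mult_right_mono power_mono) simp_all
  also have "\<dots> = real z * real (card E) ^ card F / real (2 * z) ^ card F"
    by (simp add: power_divide)
  also have "\<dots> \<le> real (card (signed_copies P Q F A B E))"
    using card_signed_copies_lower_bound[OF assms(2-5)] \<open>z > 0\<close> \<open>2 * z \<le> card E\<close>
    unfolding z_def by (simp add: divide_le_eq)
  finally show ?thesis
    unfolding z_def .
qed simp

end
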